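(* Let $G=(V,E)$ be a finite graph with at least one vertex and $k>0$ an integer, and let $\mathcal F_k$ be the set of all stars $\sigma=\{(A_i,B_i):i=0,\dots,n\}\subseteq\vec S_k$ with $\bigl|\bigcap_{i=0}^nB_i\bigr|<k$. Then $\mathcal F_k$ is closed under shifting: whenever $\vec s_0\in\vec S_k$ is linked to some $\vec r\le\vec s_0$ in $\vec S_k$ that is not forced by $\mathcal F_k$, then $\vec s_0$ is $\mathcal F_k$-linked to $\vec r$.
   Context: An oriented vertex separation of $G$ is an ordered pair $(A,B)$ with $A\cup B=V$ and no edge between $A\setminus B$ and $B\setminus A$. They form a universe $\vec U$ with $(A,B)\le(C,D)$ iff $A\subseteq C$, $B\supseteq D$; $(A,B)^*=(B,A)$; $(A,B)\vee(C,D)=(A\cup C,B\cap D)$; $(A,B)\wedge(C,D)=(A\cap C,B\cup D)$. $\vec S_k=\{(A,B)\in\vec U:|A\cap B|<k\}$ and $S_k$ is its set of separations $s=\{\vec s,\vec s^{\,*}\}$; write $\overleftarrow s=\vec s^{\,*}$; $s$ is degenerate if $\vec s=\overleftarrow s$; $\vec r$ is trivial if some $s\in S_k$ has $\vec r<\vec s$ and $\vec r<\overleftarrow s$. A star is a nonempty set $\sigma$ with $\vec r\le\overleftarrow s$ for all distinct $\vec r,\vec s\in\sigma$. $\mathcal F$ forces $\vec r$ if $\{\overleftarrow r\}\in\mathcal F$ or $r$ is degenerate (elements not forced by $\mathcal F_k$ are nontrivial and nondegenerate). For nontrivial nondegenerate $\vec r$, $\vec S_{\ge\vec r}$ is the set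 of all orientations of separations in $S_k$ having an orientation $\ge\vec r$; for $\vec s_0\ge\vec r$ the shifting map $f:\vec S_{\ge\vec r}\to\vec U$ is $f(\vec s)=\vec s\vee\vec s_0$, $f(\overleftarrow s)=(\vec s\vee\vec s_0)^*$ for all $\vec s\in\vec S_{\ge\vec r}\setminus\{\overleftarrow r\}$ with $\vec s\ge\vec r$. $\vec s_0$ is linked to $\vec r$ if $\vec s_0\ge\vec r$ and $\vec s\vee\vec s_0\in\vec S_k$ for all $\vec s\in\vec S_k$ with $\vec s\ge\vec r$, $\vec s\ne\overleftarrow r$; it is $\mathcal F$-linked to $\vec r$ if moreover $f(\sigma)\in\mathcal F$ for every star $\sigma\in\mathcal F$ with $\sigma\subseteq\vec S_{\ge\vec r}\setminus\{\overleftarrow r\}$ having an element $\ge\vec r$. *)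

theory Defs
  imports Main
begin

type_synonym 'a osep = "'a set \<times> 'a set"

definition finite_graph :: "'a set \<Rightarrow> 'a set set \<Rightarrow> bool" where
  "finite_graph V E \<longleftrightarrow> finite V \<and> (\<forall>e\<in>E. e \<subseteq> V \<and> card e = 2)"

definition is_osep :: "'a set \<Rightarrow> 'a set set \<Rightarrow> 'a osep \<Rightarrow> bool" where
  "is_osep V E s \<longleftrightarrow> fst s \<union> snd s = V \<and>
     \<not> (\<exists>e\<in>E. e \<inter> (fst s - snd s) \<noteq> {} \<and> e \<inter> (snd s - fst s) \<noteq> {})"

definition sep_le :: "'a osep \<Rightarrow> 'a osep \<Rightarrow> bool" where
  "sep_le s t \<longleftrightarrow> fst s \<subseteq> fst t \<and> snd t \<subseteq> snd s"

definition sep_less :: "'a osep \<Rightarrow> 'a osep \<Rightarrow> bool" where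
  "sep_less s t \<longleftrightarrow> sep_le s t \<and> s \<noteq> t"

definition inv_sep :: "'a osep \<Rightarrow> 'a osep" where
  "inv_sep s = (snd s, fst s)"

definition sep_join :: "'a osep \<Rightarrow> 'a osep \<Rightarrow> 'a osep" where
  "sep_join s t = (fst s \<union> fst t, snd s \<inter> snd t)"

definition sep_meet :: "'a osep \<Rightarrow> 'a osep \<Rightarrow> 'a osep" where
  "sep_meet s t = (fst s \<inter> fst t, snd s \<union> snd t)"

definition Sk :: "'a set \<Rightarrow> 'a set set \<Rightarrow> nat \<Rightarrow> 'a osep set" where
  "Sk V E k = {s. is_osep V E s \<and> card (fst s \<inter> snd s) < k}"

definition degenerate :: "'a osep \<Rightarrow> bool" where
  "degenerate s \<longleftrightarrow> s = inv_sep s"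

definition trivial_in :: "'a osep set \<Rightarrow> 'a osep \<Rightarrow> bool" where
  "trivial_in S r \<longleftrightarrow> (\<exists>s\<in>S. sep_less r s \<and> sep_less r (inv_sep s))"

definition is_star :: "'a osep set \<Rightarrow> bool" where
  "is_star \<sigma> \<longleftrightarrow> \<sigma> \<noteq> {} \<and> (\<forall>r\<in>\<sigma>. \<forall>s\<in>\<sigma>. r \<noteq> s \<longrightarrow> sep_le r (inv_sep s))"

definition Fk :: "'a set \<Rightarrow> 'a set set \<Rightarrow> nat \<Rightarrow> 'a osep set set" where
  "Fk V E k = {\<sigma>. is_star \<sigma> \<and> \<sigma> \<subseteq> Sk V E k \<and> card (\<Inter> (snd ` \<sigma>)) < k}"

definition forces :: "'a osep set set \<Rightarrow> 'a osep \<Rightarrow> bool" where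
  "forces F r \<longleftrightarrow> {inv_sep r} \<in> F \<or> degenerate r"

definition S_ge :: "'a osep set \<Rightarrow> 'a osep \<Rightarrow> 'a osep set" where
  "S_ge S r = {s\<in>S. sep_le r s \<or> sep_le r (inv_sep s)}"

definition shift :: "'a osep \<Rightarrow> 'a osep \<Rightarrow> 'a osep \<Rightarrow> 'a osep" where
  "shift r s0 s = (if sep_le r s \<and> s \<noteq> inv_sep r then sep_join s s0
                   else inv_sep (sep_join (inv_sep s) s0))"

definition linked :: "'a osep set \<Rightarrow> 'a osep \<Rightarrow> 'a osep \<Rightarrow> bool" where
  "linked S s0 r \<longleftrightarrow> sep_le r s0 \<and>
     (\<forall>s\<in>S. sep_le r s \<and> s \<noteq> inv_sep r \<longrightarrow> sep_join s s0 \<in> S)"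

definition F_linked :: "'a osep set set \<Rightarrow> 'a osep set \<Rightarrow> 'a osep \<Rightarrow> 'a osep \<Rightarrow> bool" where
  "F_linked F S s0 r \<longleftrightarrow> linked S s0 r \<and>
     (\<forall>\<sigma>\<in>F. is_star \<sigma> \<and> \<sigma> \<subseteq> S_ge S r - {inv_sep r} \<and> (\<exists>s\<in>\<sigma>. sep_le r s)
          \<longrightarrow> shift r s0 ` \<sigma> \<in> F)"

end

theory Submission
  imports Defs
begin

(* Unforcedness says that {r*} is not
   in F_k, i.e. |A_r| >= k; hence no separation of order < k has both orientations above r.
   Consequently a star sigma in F_k inside S_{>=r} - {r*} contains exactly one element s1 >= r,
   while every other t in sigma satisfies t* >= r.  The shifting map therefore sends s1 to
   s1 v s0 and every other t to t ^ s0*, and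
     (1) such an image of a star is again a star (pure lattice reasoning);
     (2) all images lie in S_k, because s0 is linked to r;
     (3) writing s1 = (C,D) and X = the intersection of all B-sides of sigma, the separation
         q = (C u X, D) has separator X, so q lies in S_k and q >= r; linkedness puts q v s0
         in S_k, and its separator contains the intersection of all B-sides of the image. *)

lemma sep_le_refl: "sep_le s s"
  unfolding sep_le_def by simp

lemma sep_le_trans: "sep_le a b \<Longrightarrow> sep_le b c \<Longrightarrow> sep_le a c"
  unfolding sep_le_def by auto

lemma inv_sep_inv_sep [simp]: "inv_sep (inv_sep s) = s"
  unfolding inv_sep_def by simp

text \<open>De Morgan: \<open>(t* \<or> s0)* = t \<and> s0*\<close>; this is how the shifting map acts on
  elements whose inverse lies above \<open>r\<close>.\<close>
lemma inv_sep_join: "inv_sep (sep_join (inv_sep t) s0) = sep_meet t (inv_sep s0)"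
  unfolding inv_sep_def sep_join_def sep_meet_def by simp

lemma Sk_inv_sep: "s \<in> Sk V E k \<Longrightarrow> inv_sep s \<in> Sk V E k"
  unfolding Sk_def is_osep_def inv_sep_def by (auto simp: Int_commute Un_commute)

lemma finite_sides:
  assumes "finite V" "s \<in> Sk V E k"
  shows "finite (fst s)" "finite (snd s)"
  using assms unfolding Sk_def is_osep_def by (auto intro: finite_subset)

text \<open>If the small side of \<open>r\<close> has fewer than \<open>k\<close> vertices then \<open>{r*}\<close> is a star in \<open>F_k\<close>.\<close>
lemma unforced_small_side_large:
  assumes "r \<in> Sk V E k" "\<not> forces (Fk V E k) r"
  shows "k \<le> card (fst r)"
proof (rule ccontr)
  assume "\<not> k \<le> card (fst r)"
  then have "{inv_sep r} \<in> Fk V E k"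
    using Sk_inv_sep[OF assms(1)] unfolding Fk_def is_star_def by (auto simp: inv_sep_def)
  then show False using assms(2) unfolding forces_def by blast
qed

text \<open>If \<open>r \<le> s\<close> and \<open>r \<le> s*\<close> then the small side of \<open>r\<close> lies in the separator of \<open>s\<close>;
  hence for \<open>|A_r| \<ge> k\<close> no separation of order \<open>< k\<close> has both orientations above \<open>r\<close>.\<close>
lemma no_two_orientations_above:
  assumes "finite V" "k \<le> card (fst r)" "s \<in> Sk V E k" "sep_le r s"
  shows "\<not> sep_le r (inv_sep s)"
proof
  assume "sep_le r (inv_sep s)"
  then have "fst r \<subseteq> fst s \<inter> snd s"
    using assms(4) unfolding sep_le_def inv_sep_def by auto
  then have "card (fst r) \<le> card (fst s \<inter> snd s)"
    using finite_sides[OF assms(1,3)] by (simp add: card_mono)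
  then show False using assms(2,3) unfolding Sk_def by simp
qed

lemma star_second_above:
  assumes "is_star \<sigma>" "s1 \<in> \<sigma>" "t \<in> \<sigma>" "t \<noteq> s1" "sep_le r t"
  shows "sep_le r (inv_sep s1)"
  using assms sep_le_trans unfolding is_star_def by metis

text \<open>This is what the shifting map does to the stars in question.\<close>
definition join_meet :: "'a osep \<Rightarrow> 'a osep \<Rightarrow> 'a osep \<Rightarrow> 'a osep" where
  "join_meet s1 s0 t = (if t = s1 then sep_join t s0 else sep_meet t (inv_sep s0))"

text \<open>The image is again a star: from \<open>a \<le> b*\<close> one gets \<open>a \<or> s0 \<le> (b \<and> s0*)*\<close> and
  \<open>a \<and> s0* \<le> (b \<or> s0)*\<close>, \<open>a \<and> s0* \<le> (b \<and> s0*)*\<close>; in set terms only \<open>A_a \<subseteq> B_b\<close> is needed.\<close>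
lemma star_image_join_meet:
  assumes star: "is_star \<sigma>" and s1: "s1 \<in> \<sigma>"
  shows "is_star (join_meet s1 s0 ` \<sigma>)"
proof -
  have le: "\<And>a b. a \<in> \<sigma> \<Longrightarrow> b \<in> \<sigma> \<Longrightarrow> a \<noteq> b \<Longrightarrow> fst a \<subseteq> snd b"
    using star unfolding is_star_def sep_le_def inv_sep_def by fastforce
  show ?thesis
    unfolding is_star_def
  proof (intro conjI ballI impI)
    show "join_meet s1 s0 ` \<sigma> \<noteq> {}" using s1 by blast
  next
    fix x y assume "x \<in> join_meet s1 s0 ` \<sigma>" "y \<in> join_meet s1 s0 ` \<sigma>" "x \<noteq> y"
    then obtain a b where ab: "a \<in> \<sigma>" "b \<in> \<sigma>" "a \<noteq> b"
      and "x = join_meet s1 s0 a" "y = join_meet s1 s0 b" by blast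
    with le[OF ab] le[OF ab(2,1) ab(3)[symmetric]] show "sep_le x (inv_sep y)"
      unfolding join_meet_def sep_le_def inv_sep_def sep_join_def sep_meet_def by auto
  qed
qed

lemma shift_eq_join_meet:
  assumes "sep_le r s1" "s1 \<noteq> inv_sep r" "\<And>t. t \<in> \<sigma> \<Longrightarrow> t \<noteq> s1 \<Longrightarrow> \<not> sep_le r t"
  shows "shift r s0 ` \<sigma> = join_meet s1 s0 ` \<sigma>"
  using assms unfolding shift_def join_meet_def by (intro image_cong) (auto simp: inv_sep_join)

definition separator :: "'a osep \<Rightarrow> 'a set" where
  "separator s = fst s \<inter> snd s"

lemma osep_enlarge_small_side:
  assumes "is_osep V E (C, D)" "C \<inter> D \<subseteq> X" "X \<subseteq> D"
  shows "is_osep V E (C \<union> X, D)" "separator (C \<union> X, D) = X"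
proof -
  have "C \<union> X - D = C - D" "D - (C \<union> X) \<subseteq> D - C" using assms(3) by auto
  then show "is_osep V E (C \<union> X, D)" using assms(1,3) unfolding is_osep_def by auto
  show "separator (C \<union> X, D) = X" using assms(2,3) unfolding separator_def by auto
qed

lemma star_Inter_snd_bounds:
  assumes "is_star \<sigma>" "s1 \<in> \<sigma>"
  shows "separator s1 \<subseteq> \<Inter> (snd ` \<sigma>)" "\<Inter> (snd ` \<sigma>) \<subseteq> snd s1"
proof -
  have "\<And>t. t \<in> \<sigma> \<Longrightarrow> t \<noteq> s1 \<Longrightarrow> fst s1 \<subseteq> snd t"
    using assms unfolding is_star_def sep_le_def inv_sep_def by fastforce
  then show "separator s1 \<subseteq> \<Inter> (snd ` \<sigma>)" unfolding separator_def by blast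
  show "\<Inter> (snd ` \<sigma>) \<subseteq> snd s1" using assms(2) by blast
qed

text \<open>The intersection of the B-sides after \<open>join_meet\<close>: outside \<open>A0\<close> every vertex already
  lay in all old B-sides.\<close>
lemma Inter_snd_join_meet:
  assumes "s1 \<in> \<sigma>" "s0 = (A0, B0)"
  shows "\<Inter> (snd ` join_meet s1 s0 ` \<sigma>) \<subseteq> (\<Inter> (snd ` \<sigma>) \<union> A0) \<inter> (snd s1 \<inter> B0)"
proof
  fix v assume v: "v \<in> \<Inter> (snd ` join_meet s1 s0 ` \<sigma>)"
  have in_image: "v \<in> snd (join_meet s1 s0 t)" if "t \<in> \<sigma>" for t
    using v that by blast
  have "v \<in> snd s1 \<inter> B0"
    using in_image[OF assms(1)] assms(2) unfolding join_meet_def sep_join_def by simp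
  moreover have "v \<in> snd t" if "t \<in> \<sigma>" "v \<notin> A0" for t
    using in_image[OF that(1)] that(2) \<open>v \<in> snd s1 \<inter> B0\<close> assms(2)
    unfolding join_meet_def sep_meet_def inv_sep_def by (auto split: if_splits)
  ultimately show "v \<in> (\<Inter> (snd ` \<sigma>) \<union> A0) \<inter> (snd s1 \<inter> B0)" by blast
qed

locale shift_situation =
  fixes V :: "'a set" and E :: "'a set set" and k :: nat and r s0 s1 :: "'a osep"
    and \<sigma> :: "'a osep set"
  assumes finite_V: "finite V"
    and r_large: "k \<le> card (fst r)"
    and linked: "linked (Sk V E k) s0 r"
    and \<sigma>_Fk: "\<sigma> \<in> Fk V E k"
    and \<sigma>_ge: "\<sigma> \<subseteq> S_ge (Sk V E k) r - {inv_sep r}"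
    and s1: "s1 \<in> \<sigma>" "sep_le r s1"
begin

lemma star: "is_star \<sigma>" and \<sigma>_Sk: "\<sigma> \<subseteq> Sk V E k"
  using \<sigma>_Fk unfolding Fk_def by auto

lemma join_in_Sk: "s \<in> Sk V E k \<Longrightarrow> sep_le r s \<Longrightarrow> s \<noteq> inv_sep r \<Longrightarrow> sep_join s s0 \<in> Sk V E k"
  using linked unfolding linked_def by blast

lemma others_not_above: "t \<in> \<sigma> \<Longrightarrow> t \<noteq> s1 \<Longrightarrow> \<not> sep_le r t"
  using star_second_above[OF star s1(1)] no_two_orientations_above[OF finite_V r_large]
    s1 \<sigma>_Sk by blast

lemma shift_image: "shift r s0 ` \<sigma> = join_meet s1 s0 ` \<sigma>"
  using shift_eq_join_meet s1 \<sigma>_ge others_not_above by blast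

text \<open>Linkedness puts every shifted element in \<open>S_k\<close>: directly for \<open>s1\<close>, and via \<open>t* \<ge> r\<close>
  and closure under inversion for the others.\<close>
lemma image_in_Sk: "join_meet s1 s0 ` \<sigma> \<subseteq> Sk V E k"
proof
  fix x assume "x \<in> join_meet s1 s0 ` \<sigma>"
  then obtain t where t: "t \<in> \<sigma>" "x = join_meet s1 s0 t" by blast
  show "x \<in> Sk V E k"
  proof (cases "t = s1")
    case True
    have "s1 \<noteq> inv_sep r" using s1(1) \<sigma>_ge by blast
    then have "sep_join s1 s0 \<in> Sk V E k" using join_in_Sk s1 \<sigma>_Sk by blast
    then show ?thesis using True t unfolding join_meet_def by simp
  next
    case False
    then have not_above: "\<not> sep_le r t" using others_not_above t(1) by blast
    then have "sep_le r (inv_sep t)" using t(1) \<sigma>_ge unfolding S_ge_def by blast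
    moreover have "inv_sep t \<noteq> inv_sep r" using not_above sep_le_refl by (metis inv_sep_inv_sep)
    ultimately have "sep_join (inv_sep t) s0 \<in> Sk V E k"
      using join_in_Sk Sk_inv_sep t(1) \<sigma>_Sk by blast
    then show ?thesis using t False Sk_inv_sep unfolding join_meet_def by (metis inv_sep_join)
  qed
qed

text \<open>The key step: enlarge \<open>s1 = (C,D)\<close> to \<open>q = (C \<union> X, D)\<close> with \<open>X = \<Inter> (snd ` \<sigma>)\<close>,
  then linkedness bounds the separator of \<open>q \<or> s0\<close>.\<close>
lemma image_Inter_small: "card (\<Inter> (snd ` join_meet s1 s0 ` \<sigma>)) < k"
proof -
  obtain C D where s1_eq: "s1 = (C, D)" by fastforce
  obtain A0 B0 where s0_eq: "s0 = (A0, B0)" by fastforce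
  define X where "X = \<Inter> (snd ` \<sigma>)"
  have X_small: "card X < k" using \<sigma>_Fk unfolding Fk_def X_def by blast
  have X_bounds: "C \<inter> D \<subseteq> X" "X \<subseteq> D"
    using star_Inter_snd_bounds[OF star s1(1)] unfolding X_def s1_eq separator_def by auto
  have "s1 \<in> Sk V E k" using s1(1) \<sigma>_Sk by blast
  then have "is_osep V E (C, D)" unfolding s1_eq Sk_def by simp
  note q_osep = osep_enlarge_small_side(1)[OF this X_bounds]
    and q_sep = osep_enlarge_small_side(2)[OF this X_bounds]
  have q_Sk: "(C \<union> X, D) \<in> Sk V E k"
    using q_osep q_sep X_small unfolding Sk_def separator_def by simp
  have q_above: "sep_le r (C \<union> X, D)" using s1(2) unfolding s1_eq sep_le_def by auto
  then have "\<not> sep_le r (inv_sep (C \<union> X, D))"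
    using no_two_orientations_above[OF finite_V r_large q_Sk] by blast
  then have "(C \<union> X, D) \<noteq> inv_sep r" using sep_le_refl by (metis inv_sep_inv_sep)
  then have "sep_join (C \<union> X, D) s0 \<in> Sk V E k" using join_in_Sk q_Sk q_above by blast
  then have joined_small: "card ((C \<union> X \<union> A0) \<inter> (D \<inter> B0)) < k"
    unfolding Sk_def s0_eq sep_join_def by simp
  have "\<Inter> (snd ` join_meet s1 s0 ` \<sigma>) \<subseteq> (C \<union> X \<union> A0) \<inter> (D \<inter> B0)"
    using Inter_snd_join_meet[OF s1(1) s0_eq] unfolding X_def s1_eq by auto
  moreover have "finite (D \<inter> B0)"
    using finite_sides(2)[OF finite_V, of s1] s1(1) \<sigma>_Sk unfolding s1_eq by auto
  ultimately have "card (\<Inter> (snd ` join_meet s1 s0 ` \<sigma>)) \<le> card ((C \<union> X \<union> A0) \<inter> (D \<inter> B0))"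
    by (simp add: card_mono)
  with joined_small show ?thesis by linarith
qed

lemma shift_image_in_Fk: "shift r s0 ` \<sigma> \<in> Fk V E k"
  using star_image_join_meet[OF star s1(1)] image_in_Sk image_Inter_small
  unfolding shift_image Fk_def by blast

end

theorem lemma5p6:
  fixes V :: "'a set" and E :: "'a set set" and k :: nat
  assumes "finite_graph V E" and "V \<noteq> {}" and "k > 0"
  shows "\<forall>s0\<in>Sk V E k. \<forall>r\<in>Sk V E k.
           sep_le r s0 \<and> \<not> forces (Fk V E k) r \<and> linked (Sk V E k) s0 r
           \<longrightarrow> F_linked (Fk V E k) (Sk V E k) s0 r"
proof (intro ballI impI)
  fix s0 r
  assume r: "r \<in> Sk V E k"
    and H: "sep_le r s0 \<and> \<not> forces (Fk V E k) r \<and> linked (Sk V E k) s0 r"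
  have finite_V: "finite V" using assms(1) unfolding finite_graph_def by blast
  have r_large: "k \<le> card (fst r)" using unforced_small_side_large r H by blast
  show "F_linked (Fk V E k) (Sk V E k) s0 r"
    unfolding F_linked_def
  proof (intro conjI ballI impI)
    show "linked (Sk V E k) s0 r" using H by blast
  next
    fix \<sigma> assume "\<sigma> \<in> Fk V E k"
      and "is_star \<sigma> \<and> \<sigma> \<subseteq> S_ge (Sk V E k) r - {inv_sep r} \<and> (\<exists>s\<in>\<sigma>. sep_le r s)"
    then obtain s1 where "shift_situation V E k r s0 s1 \<sigma>"
      using finite_V r_large H unfolding shift_situation_def by blast
    then show "shift r s0 ` \<sigma> \<in> Fk V E k" by (rule shift_situation.shift_image_in_Fk)
  qed
qed

end
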